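(* (i) Let $\mathcal G$ be a complex Lie algebra with subalgebra $\mathcal H$ and bilinear form $(\cdot,\cdot)$ satisfying GR1–GR3. Then $(\alpha,\delta)=0$ for all $\alpha\in R$ and $\delta\in R^0$. (ii) Let $(\mathcal G,(\cdot,\cdot),\mathcal H)$ be a generalized reductive Lie algebra. Then $\delta\in R^0$ is isolated if and only if $\mathcal G_\delta\subseteq C_{\mathcal G}(\mathcal G_c)$, the centralizer of the core in $\mathcal G$.
   Context: (GR1) $(\cdot,\cdot)$ is symmetric, nondegenerate and invariant on $\mathcal G$. (GR2) $\mathcal H$ is a nontrivial finite-dimensional abelian subalgebra equal to its centralizer in $\mathcal G$, and $\mathrm{ad}(h)$ is diagonalizable for all $h\in\mathcal H$. Then $\mathcal G=\bigoplus_{\alpha\in\mathcal H^*}\mathcal G_\alpha$, $\mathcal G_\alpha=\{x:[h,x]=\alpha(h)x\ \forall h\in\mathcal H\}$, root system $R=\{\alpha:\mathcal G_\alpha\ne0\}$; the form is nondegenerate on $\mathcal H$; $t_\alpha\in\mathcal H$ with $(t_\alpha,h)=\alpha(h)$ for all $h$; $(\alpha,\beta):=(t_\alpha,t_\beta)$; $R^\times=\{\alpha\in R:(\alpha,\alpha)\ne0\}$, $R^0=\{\alpha\in R:(\alpha,\alpha)=0\}$. (GR3) for $\alpha\in R^\times$, $x\in\mathcal G_\alpha$, $\mathrm{ad}(x)$ is locally nilpotent on $\mathcal G$. (GR4) $R$ is discrete in $\mathcal H^*$. (GR5) $R^\times\ne\emptyset$. A generalized reductive Lie algebra is a triple satisfying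 GR1–GR5. The core $\mathcal G_c$ is the subalgebra generated by $\mathcal G_\alpha$, $\alpha\in R^\times$. A root $\delta\in R^0$ is isolated if $\delta+\alpha\notin R$ for every $\alpha\in R^\times$. *)

theory Defs
  imports Complex_Main
begin

definition lie_algebra :: "(complex \<Rightarrow> 'g::ab_group_add \<Rightarrow> 'g) \<Rightarrow> ('g \<Rightarrow> 'g \<Rightarrow> 'g) \<Rightarrow> bool" where
  "lie_algebra sc br \<longleftrightarrow> vector_space sc
     \<and> (\<forall>x. Vector_Spaces.linear sc sc (br x))
     \<and> (\<forall>y. Vector_Spaces.linear sc sc (\<lambda>x. br x y))
     \<and> (\<forall>x. br x x = 0)
     \<and> (\<forall>x y z. br x (br y z) + br y (br z x) + br z (br x y) = 0)"

definition lie_subalgebra :: "(complex \<Rightarrow> 'g::ab_group_add \<Rightarrow> 'g) \<Rightarrow> ('g \<Rightarrow> 'g \<Rightarrow> 'g) \<Rightarrow> 'g set \<Rightarrow> bool" where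
  "lie_subalgebra sc br S \<longleftrightarrow> module.subspace sc S \<and> (\<forall>x\<in>S. \<forall>y\<in>S. br x y \<in> S)"

definition generated_subalgebra :: "(complex \<Rightarrow> 'g::ab_group_add \<Rightarrow> 'g) \<Rightarrow> ('g \<Rightarrow> 'g \<Rightarrow> 'g) \<Rightarrow> 'g set \<Rightarrow> 'g set" where
  "generated_subalgebra sc br X = \<Inter> {S. lie_subalgebra sc br S \<and> X \<subseteq> S}"

definition centralizer :: "('g \<Rightarrow> 'g \<Rightarrow> 'g::ab_group_add) \<Rightarrow> 'g set \<Rightarrow> 'g set" where
  "centralizer br S = {x. \<forall>y\<in>S. br x y = 0}"

definition GR1 :: "(complex \<Rightarrow> 'g::ab_group_add \<Rightarrow> 'g) \<Rightarrow> ('g \<Rightarrow> 'g \<Rightarrow> 'g) \<Rightarrow> ('g \<Rightarrow> 'g \<Rightarrow> complex) \<Rightarrow> bool" where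
  "GR1 sc br B \<longleftrightarrow>
     (\<forall>x. Vector_Spaces.linear sc ((*)) (B x))
     \<and> (\<forall>y. Vector_Spaces.linear sc ((*)) (\<lambda>x. B x y))
     \<and> (\<forall>x y. B x y = B y x)
     \<and> (\<forall>x. (\<forall>y. B x y = 0) \<longrightarrow> x = 0)
     \<and> (\<forall>x y z. B (br x y) z = B x (br y z))"

definition GR2 :: "(complex \<Rightarrow> 'g::ab_group_add \<Rightarrow> 'g) \<Rightarrow> ('g \<Rightarrow> 'g \<Rightarrow> 'g) \<Rightarrow> 'g set \<Rightarrow> bool" where
  "GR2 sc br H \<longleftrightarrow>
     lie_subalgebra sc br H
     \<and> H \<noteq> {0}
     \<and> (\<exists>S. finite S \<and> S \<subseteq> H \<and> module.span sc S = H)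
     \<and> (\<forall>h\<in>H. \<forall>k\<in>H. br h k = 0)
     \<and> centralizer br H = H
     \<and> (\<forall>h\<in>H. module.span sc {x. \<exists>c. br h x = sc c x} = UNIV)"

text \<open>Elements of the dual space H^*: linear functionals on H, normalised to vanish off H
  (so that each element of H^* has exactly one representative).\<close>
definition dual_space :: "(complex \<Rightarrow> 'g::ab_group_add \<Rightarrow> 'g) \<Rightarrow> 'g set \<Rightarrow> ('g \<Rightarrow> complex) set" where
  "dual_space sc H = {\<alpha>. (\<forall>h\<in>H. \<forall>k\<in>H. \<alpha> (h + k) = \<alpha> h + \<alpha> k)
                       \<and> (\<forall>c. \<forall>h\<in>H. \<alpha> (sc c h) = c * \<alpha> h)
                       \<and> (\<forall>x. x \<notin> H \<longrightarrow> \<alpha> x = 0)}"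

definition root_space :: "(complex \<Rightarrow> 'g::ab_group_add \<Rightarrow> 'g) \<Rightarrow> ('g \<Rightarrow> 'g \<Rightarrow> 'g) \<Rightarrow> 'g set \<Rightarrow> ('g \<Rightarrow> complex) \<Rightarrow> 'g set" where
  "root_space sc br H \<alpha> = {x. \<forall>h\<in>H. br h x = sc (\<alpha> h) x}"

definition roots :: "(complex \<Rightarrow> 'g::ab_group_add \<Rightarrow> 'g) \<Rightarrow> ('g \<Rightarrow> 'g \<Rightarrow> 'g) \<Rightarrow> 'g set \<Rightarrow> ('g \<Rightarrow> complex) set" where
  "roots sc br H = {\<alpha> \<in> dual_space sc H. root_space sc br H \<alpha> \<noteq> {0}}"

definition tvec :: "('g \<Rightarrow> 'g \<Rightarrow> complex) \<Rightarrow> 'g set \<Rightarrow> ('g \<Rightarrow> complex) \<Rightarrow> 'g" where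
  "tvec B H \<alpha> = (THE t. t \<in> H \<and> (\<forall>h\<in>H. B t h = \<alpha> h))"

definition root_form :: "('g \<Rightarrow> 'g \<Rightarrow> complex) \<Rightarrow> 'g set \<Rightarrow> ('g \<Rightarrow> complex) \<Rightarrow> ('g \<Rightarrow> complex) \<Rightarrow> complex" where
  "root_form B H \<alpha> \<beta> = B (tvec B H \<alpha>) (tvec B H \<beta>)"

definition nonisotropic_roots where
  "nonisotropic_roots sc br B H = {\<alpha> \<in> roots sc br H. root_form B H \<alpha> \<alpha> \<noteq> 0}"

definition isotropic_roots where
  "isotropic_roots sc br B H = {\<alpha> \<in> roots sc br H. root_form B H \<alpha> \<alpha> = 0}"

definition GR3 :: "(complex \<Rightarrow> 'g::ab_group_add \<Rightarrow> 'g) \<Rightarrow> ('g \<Rightarrow> 'g \<Rightarrow> 'g) \<Rightarrow> ('g \<Rightarrow> 'g \<Rightarrow> complex) \<Rightarrow> 'g set \<Rightarrow> bool" where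
  "GR3 sc br B H \<longleftrightarrow>
     (\<forall>\<alpha>\<in>nonisotropic_roots sc br B H. \<forall>x\<in>root_space sc br H \<alpha>. \<forall>y. \<exists>n. (br x ^^ n) y = 0)"

text \<open>(GR4): R is discrete in H^*.  H^* is finite dimensional and carries its unique
  vector space topology, which is the weak topology of evaluations at elements of H;
  discreteness of R means each root has a neighbourhood containing no other root.\<close>
definition GR4 :: "(complex \<Rightarrow> 'g::ab_group_add \<Rightarrow> 'g) \<Rightarrow> ('g \<Rightarrow> 'g \<Rightarrow> 'g) \<Rightarrow> 'g set \<Rightarrow> bool" where
  "GR4 sc br H \<longleftrightarrow>
     (\<forall>\<alpha>\<in>roots sc br H. \<exists>S \<epsilon>. finite S \<and> S \<subseteq> H \<and> \<epsilon> > 0 \<and>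
        (\<forall>\<beta>\<in>roots sc br H. \<beta> \<noteq> \<alpha> \<longrightarrow> (\<exists>h\<in>S. \<epsilon> \<le> cmod (\<beta> h - \<alpha> h))))"

definition GR5 :: "(complex \<Rightarrow> 'g::ab_group_add \<Rightarrow> 'g) \<Rightarrow> ('g \<Rightarrow> 'g \<Rightarrow> 'g) \<Rightarrow> ('g \<Rightarrow> 'g \<Rightarrow> complex) \<Rightarrow> 'g set \<Rightarrow> bool" where
  "GR5 sc br B H \<longleftrightarrow> nonisotropic_roots sc br B H \<noteq> {}"

definition generalized_reductive where
  "generalized_reductive sc br B H \<longleftrightarrow> lie_algebra sc br \<and> GR1 sc br B \<and> GR2 sc br H
     \<and> GR3 sc br B H \<and> GR4 sc br H \<and> GR5 sc br B H"

definition core where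
  "core sc br B H = generated_subalgebra sc br
      (\<Union>\<alpha>\<in>nonisotropic_roots sc br B H. root_space sc br H \<alpha>)"

definition isolated_root where
  "isolated_root sc br B H \<delta> \<longleftrightarrow> \<delta> \<in> isotropic_roots sc br B H \<and>
     (\<forall>\<alpha>\<in>nonisotropic_roots sc br B H. (\<lambda>x. \<delta> x + \<alpha> x) \<notin> roots sc br H)"

end

theory Submission
  imports Defs "HOL-Library.Function_Algebras"
begin

(* Simultaneously diagonalising ad H shows that B pairs G_delta nondegenerately with
   G_(-delta). Hence B is nondegenerate on H = G_0, every alpha in H^* is represented by
   some t_alpha in H, and [x, y] = B(x, y) t_delta for x in G_delta, y in G_(-delta).

   (i) Let delta be isotropic with c = (alpha, delta) <> 0, and take x in G_delta,
   y in G_(-delta) with [x, y] = t_delta. Since delta(t_delta) = 0, t_delta acts on every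
   G_(alpha + k delta) by the scalar c, so x, y, t_delta span a Heisenberg algebra acting on
   the delta-string through alpha. Starting from a nonzero vector of G_alpha, either all its
   (ad x)-iterates are nonzero, or all (ad y)-iterates of its last nonzero (ad x)-iterate
   are; either way alpha + k delta is a root for infinitely many k. On the other hand, for
   every nonisotropic root beta = alpha + k delta the sl2-triple of beta (which exists by
   GR3) makes 2 (delta, beta) / (beta, beta) = 2c / ((alpha, alpha) + 2kc) a nonzero
   integer, and this bounds k.

   (ii) If delta is isolated, then [G_delta, G_alpha] lies in G_(delta + alpha) = 0 for
   every nonisotropic alpha, and an element centralizes a set iff it centralizes the
   subalgebra generated by it. Conversely, if beta = delta + alpha is a root, then (i)
   gives (beta, beta) = (alpha, alpha) <> 0. For the sl2-triple (e, f, h_beta) of beta and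
   0 <> g in G_(-alpha), which has h_beta-weight -2, the vector [e, g] lies in G_delta and
   so commutes with f in the core; but f [e, g] = 0 would force the weight -2 to be a
   natural number. *)

definition locally_nilpotent :: "('a \<Rightarrow> 'a::zero) \<Rightarrow> bool" where
  "locally_nilpotent T \<longleftrightarrow> (\<forall>y. \<exists>n. (T ^^ n) y = 0)"

lemma funpow_last_nonzero:
  fixes T :: "'a \<Rightarrow> 'a::zero"
  assumes "v \<noteq> 0" "(T ^^ n) v = 0"
  obtains N where "(T ^^ N) v \<noteq> 0" "(T ^^ Suc N) v = 0"
  using assms(2)
proof (induction n)
  case 0
  with assms(1) show ?case by simp
next
  case (Suc n)
  then show ?case by (cases "(T ^^ n) v = 0") auto
qed

lemma finite_int_affine_bounded:
  fixes a c :: complex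
  assumes "c \<noteq> 0"
  shows "finite {k::int. cmod (a + of_int k * c) \<le> r}"
proof (rule finite_subset)
  define M where "M = (r + cmod a) / cmod c"
  show "{k::int. cmod (a + of_int k * c) \<le> r} \<subseteq> {-\<lceil>M\<rceil>..\<lceil>M\<rceil>}"
  proof
    fix k assume "k \<in> {k::int. cmod (a + of_int k * c) \<le> r}"
    then have "\<bar>of_int k\<bar> * cmod c \<le> r + cmod a"
      using norm_triangle_ineq4[of "a + of_int k * c" a] by (simp add: norm_mult)
    then have "\<bar>of_int k\<bar> \<le> M"
      using assms by (simp add: M_def field_simps)
    then show "k \<in> {-\<lceil>M\<rceil>..\<lceil>M\<rceil>}" by auto linarith+
  qed
qed simp

lemma sum_fun_apply: "sum F A x = (\<Sum>a\<in>A. F a x)"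
  by (induction A rule: infinite_finite_induct) auto

interpretation fun_space: vector_space "\<lambda>(c::'a::field) (f::'b \<Rightarrow> 'a) x. c * f x"
  by unfold_locales (auto simp: fun_eq_iff algebra_simps)

lemma fun_space_independent_supported_card_le:
  fixes X :: "('b \<Rightarrow> 'a::field) set"
  assumes "finite S" "fun_space.independent X" "\<And>f x. f \<in> X \<Longrightarrow> x \<notin> S \<Longrightarrow> f x = 0"
  shows "finite X" "card X \<le> card S"
proof -
  define ind where "ind s = (\<lambda>x. if s = x then 1 else 0 :: 'a)" for s :: 'b
  have expand: "f = (\<Sum>s\<in>S. (\<lambda>x. f s * ind s x))" if "f \<in> X" for f
  proof
    fix x
    have "(\<Sum>s\<in>S. f s * ind s x) = (\<Sum>s\<in>S. if s = x then f s else 0)"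
      by (rule sum.cong) (simp_all add: ind_def)
    also have "\<dots> = (if x \<in> S then f x else 0)"
      using assms(1) by (rule sum.delta)
    finally have "(\<Sum>s\<in>S. f s * ind s x) = (if x \<in> S then f x else 0)" .
    then show "f x = (\<Sum>s\<in>S. (\<lambda>x. f s * ind s x)) x"
      using assms(3)[OF that] by (simp add: sum_fun_apply)
  qed
  have terms: "(\<lambda>x. f s * ind s x) \<in> fun_space.span (ind ` S)" if "s \<in> S" for f s
    using fun_space.span_scale[OF fun_space.span_base[OF imageI[OF that]]] by simp
  have "X \<subseteq> fun_space.span (ind ` S)"
  proof
    fix f assume "f \<in> X"
    then show "f \<in> fun_space.span (ind ` S)"
      using expand[OF \<open>f \<in> X\<close>] fun_space.span_sum[of S "\<lambda>s x. f s * ind s x" "ind ` S"]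
        terms[of _ f] by simp
  qed
  then have "finite X" "card X \<le> card (ind ` S)"
    using fun_space.independent_span_bound[OF finite_imageI[OF assms(1)] assms(2)] by auto
  then show "finite X" "card X \<le> card S"
    using card_image_le[OF assms(1), of ind] by auto
qed

lemma fun_space_supported_in_span:
  fixes X :: "('b \<Rightarrow> 'a::field) set"
  assumes "finite S" "fun_space.independent X" "card X = card S"
    and "\<And>f x. f \<in> X \<Longrightarrow> x \<notin> S \<Longrightarrow> f x = 0" and "\<And>x. x \<notin> S \<Longrightarrow> g x = 0"
  shows "g \<in> fun_space.span X"
proof (rule ccontr)
  assume "g \<notin> fun_space.span X"
  then have "fun_space.independent (insert g X)"
    using fun_space.independent_insertI assms(2) by blast
  then have "card (insert g X) \<le> card S"
    by (rule fun_space_independent_supported_card_le[OF assms(1)]) (use assms(4,5) in auto)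
  moreover have "g \<notin> X" using \<open>g \<notin> fun_space.span X\<close> fun_space.span_superset by blast
  moreover have "finite X"
    using fun_space_independent_supported_card_le(1)[OF assms(1,2)] assms(4) by blast
  ultimately show False using assms(3) by simp
qed

context vector_space
begin

lemma eigenvector_sum_eq_0D:
  assumes T: "Vector_Spaces.linear scale scale T" and "finite M"
    and "\<And>\<mu>. \<mu> \<in> M \<Longrightarrow> T (w \<mu>) = scale \<mu> (w \<mu>)"
    and "sum w M = 0" and "\<mu> \<in> M"
  shows "w \<mu> = 0"
proof -
  interpret T: Vector_Spaces.linear scale scale T by (fact T)
  have "\<forall>\<mu>\<in>M. w \<mu> = 0"
    using assms(2-4)
  proof (induction M arbitrary: w rule: finite_induct)
    case empty
    then show ?case by simp
  next
    case (insert a M)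
    define w' where "w' \<mu> = scale (\<mu> - a) (w \<mu>)" for \<mu>
    have eigen': "T (w' \<mu>) = scale \<mu> (w' \<mu>)" if "\<mu> \<in> M" for \<mu>
      using insert.prems(1) that by (simp add: w'_def T.scale scale_left_commute)
    have sum_M: "sum w M = - w a"
      using insert by (simp add: eq_neg_iff_add_eq_0 add.commute)
    have "sum w' M = (\<Sum>\<mu>\<in>M. T (w \<mu>) - scale a (w \<mu>))"
      using insert.prems(1) by (intro sum.cong) (auto simp: w'_def scale_left_diff_distrib)
    also have "\<dots> = T (sum w M) - scale a (sum w M)"
      by (simp add: sum_subtractf T.sum scale_sum_right)
    also have "\<dots> = 0"
      using sum_M insert.prems(1) by (simp add: T.neg)
    finally have "\<forall>\<mu>\<in>M. w' \<mu> = 0"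
      using insert.IH[OF eigen'] by simp
    then have "\<forall>\<mu>\<in>M. w \<mu> = 0"
      using insert.hyps by (auto simp: w'_def)
    moreover from this have "w a = 0"
      using sum_M by simp
    ultimately show ?case by simp
  qed
  then show ?thesis using assms(5) by blast
qed

lemma eigencomponents_in_kernel:
  assumes S: "Vector_Spaces.linear scale scale S" and T: "Vector_Spaces.linear scale scale T"
    and commute: "\<And>v. S (T v) = T (S v)"
    and "finite M" and eigen: "\<And>\<mu>. \<mu> \<in> M \<Longrightarrow> S (w \<mu>) = scale \<mu> (w \<mu>)"
    and "T (sum w M) = 0" and "\<mu> \<in> M"
  shows "T (w \<mu>) = 0"
proof (rule eigenvector_sum_eq_0D[OF S \<open>finite M\<close> _ _ \<open>\<mu> \<in> M\<close>])
  interpret T: Vector_Spaces.linear scale scale T by (fact T)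
  show "S (T (w \<nu>)) = scale \<nu> (T (w \<nu>))" if "\<nu> \<in> M" for \<nu>
    using eigen[OF that] by (simp add: commute T.scale)
  show "(\<Sum>\<nu>\<in>M. T (w \<nu>)) = 0"
    using \<open>T (sum w M) = 0\<close> by (simp add: T.sum)
qed

lemma eigenspace_decomposition:
  assumes T: "Vector_Spaces.linear scale scale T" and "span {x. \<exists>c. T x = scale c x} = UNIV"
  obtains M w where "finite M" "\<And>\<mu>. T (w \<mu>) = scale \<mu> (w \<mu>)"
    "\<And>\<mu>. \<mu> \<notin> M \<Longrightarrow> w \<mu> = 0" "sum w M = y"
proof -
  interpret T: Vector_Spaces.linear scale scale T by (fact T)
  have "y \<in> span {x. \<exists>c. T x = scale c x}"
    using assms(2) by simp
  then obtain t r where t: "finite t" "t \<subseteq> {x. \<exists>c. T x = scale c x}"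
    and y: "y = (\<Sum>a\<in>t. scale (r a) a)"
    unfolding span_explicit by blast
  define ev where "ev a = (SOME c. T a = scale c a)" for a
  have ev: "T a = scale (ev a) a" if "a \<in> t" for a
    using t that unfolding ev_def by (auto intro: someI_ex)
  define w where "w \<mu> = (\<Sum>a\<in>{a\<in>t. ev a = \<mu>}. scale (r a) a)" for \<mu>
  show ?thesis
  proof
    show "finite (ev ` t)" using t(1) by simp
    show "T (w \<mu>) = scale \<mu> (w \<mu>)" for \<mu>
      unfolding w_def T.sum scale_sum_right
      by (intro sum.cong) (auto simp: T.scale ev scale_left_commute)
    show "w \<mu> = 0" if "\<mu> \<notin> ev ` t" for \<mu>
    proof -
      from that have "{a \<in> t. ev a = \<mu>} = {}" by blast
      then show ?thesis unfolding w_def by (simp only: sum.empty)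
    qed
    show "sum w (ev ` t) = y"
      unfolding w_def y using sum.image_gen[OF t(1), of "\<lambda>a. scale (r a) a" ev] by simp
  qed
qed

lemma eq_on_span_additive:
  fixes f g :: "'b \<Rightarrow> 'a"
  assumes f_add: "\<And>x y. x \<in> span S \<Longrightarrow> y \<in> span S \<Longrightarrow> f (x + y) = f x + f y"
    and f_scale: "\<And>c x. x \<in> span S \<Longrightarrow> f (scale c x) = c * f x"
    and g_add: "\<And>x y. x \<in> span S \<Longrightarrow> y \<in> span S \<Longrightarrow> g (x + y) = g x + g y"
    and g_scale: "\<And>c x. x \<in> span S \<Longrightarrow> g (scale c x) = c * g x"
    and "\<And>s. s \<in> S \<Longrightarrow> f s = g s" and "x \<in> span S"
  shows "f x = g x"
proof -
  have "f 0 = 0" "g 0 = 0" using f_scale[of 0 0] g_scale[of 0 0] span_zero by auto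
  then have "subspace {x \<in> span S. f x = g x}"
    unfolding subspace_def by (simp add: f_add f_scale g_add g_scale span_zero span_add span_scale)
  then have "span S \<subseteq> {x \<in> span S. f x = g x}"
    using assms(5) span_superset by (intro span_minimal) auto
  then show ?thesis using assms(6) by blast
qed

(* For a basis S0 of H, t \<mapsto> B t restricted to S0 injects H into the functions
   supported on S0, a space of dimension at most card S0 = dim H; so it is onto. *)
lemma bilinear_form_represents_functional:
  fixes B :: "'b \<Rightarrow> 'b \<Rightarrow> 'a" and \<alpha> :: "'b \<Rightarrow> 'a"
  assumes "finite S" and H: "span S = H"
    and lin_left: "\<And>y. Vector_Spaces.linear scale (*) (\<lambda>x. B x y)"
    and lin_right: "\<And>x. Vector_Spaces.linear scale (*) (B x)"
    and nondeg: "\<And>t. t \<in> H \<Longrightarrow> (\<And>h. h \<in> H \<Longrightarrow> B t h = 0) \<Longrightarrow> t = 0"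
    and \<alpha>_add: "\<And>h k. h \<in> H \<Longrightarrow> k \<in> H \<Longrightarrow> \<alpha> (h + k) = \<alpha> h + \<alpha> k"
    and \<alpha>_scale: "\<And>c h. h \<in> H \<Longrightarrow> \<alpha> (scale c h) = c * \<alpha> h"
  shows "\<exists>t\<in>H. \<forall>h\<in>H. B t h = \<alpha> h"
proof -
  obtain S0 where S0: "S0 \<subseteq> S" "independent S0" "S \<subseteq> span S0"
    using maximal_independent_subset[of S] by blast
  have "finite S0" using S0(1) \<open>finite S\<close> by (rule finite_subset)
  have span_S0: "span S0 = H"
    using S0 span_superset[of S] unfolding H[symmetric] span_eq by blast
  have "S0 \<subseteq> H" using span_superset[of S0] span_S0 by simp
  have B_add: "B (x + y) z = B x z + B y z" and B_scale: "B (scale c x) z = c * B x z" for x y z c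
    using lin_left[of z] unfolding Vector_Spaces.linear_iff by auto
  have B_diff: "B (x - y) z = B x z - B y z" for x y z
    using B_add[of "x - y" y z] by (simp add: eq_diff_eq)
  have extend: "\<forall>h\<in>H. B t h = \<beta> h"
    if "\<forall>s\<in>S0. B t s = \<beta> s" and "\<And>h k. h \<in> H \<Longrightarrow> k \<in> H \<Longrightarrow> \<beta> (h + k) = \<beta> h + \<beta> k"
      and "\<And>c h. h \<in> H \<Longrightarrow> \<beta> (scale c h) = c * \<beta> h" for t \<beta>
    using eq_on_span_additive[of S0 "B t" \<beta>] lin_right[of t] that
    unfolding span_S0 Vector_Spaces.linear_iff by blast
  define restr where "restr f = (\<lambda>s. if s \<in> S0 then f s else 0)" for f :: "'b \<Rightarrow> 'a"
  define \<Phi> where "\<Phi> t = restr (B t)" for t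
  have "Vector_Spaces.linear scale (\<lambda>c f x. c * f x) \<Phi>"
    unfolding Vector_Spaces.linear_iff using vector_space_axioms fun_space.vector_space_axioms
    by (auto simp: \<Phi>_def restr_def fun_eq_iff B_add B_scale)
  then interpret \<Phi>: Vector_Spaces.linear scale "\<lambda>c f x. c * f x" \<Phi> .
  have "inj_on \<Phi> H"
  proof (rule inj_onI)
    fix t u assume "t \<in> H" "u \<in> H" "\<Phi> t = \<Phi> u"
    then have "\<forall>s\<in>S0. B (t - u) s = 0"
      unfolding \<Phi>_def restr_def fun_eq_iff B_diff by (metis eq_iff_diff_eq_0)
    then have "\<forall>h\<in>H. B (t - u) h = 0" using extend[of "t - u" "\<lambda>_. 0"] by simp
    moreover have "t - u \<in> H" using \<open>t \<in> H\<close> \<open>u \<in> H\<close> span_S0 span_diff by blast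
    ultimately have "t - u = 0" using nondeg by blast
    then show "t = u" by simp
  qed
  have independent_\<Phi>: "fun_space.independent (\<Phi> ` S0)"
    using \<Phi>.independent_injective_image[OF S0(2)] \<open>inj_on \<Phi> H\<close> span_S0 by simp
  have card_\<Phi>: "card (\<Phi> ` S0) = card S0"
    using card_image inj_on_subset[OF \<open>inj_on \<Phi> H\<close> \<open>S0 \<subseteq> H\<close>] by blast
  have "restr \<alpha> \<in> fun_space.span (\<Phi> ` S0)"
    by (rule fun_space_supported_in_span[OF \<open>finite S0\<close> independent_\<Phi> card_\<Phi>])
      (auto simp: \<Phi>_def restr_def)
  also have "fun_space.span (\<Phi> ` S0) = \<Phi> ` H" using \<Phi>.span_image span_S0 by simp
  finally obtain t where "t \<in> H" "restr \<alpha> = restr (B t)" unfolding \<Phi>_def by blast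
  then have "\<forall>s\<in>S0. B t s = \<alpha> s" unfolding restr_def by (metis (mono_tags) fun_cong)
  then show ?thesis using extend \<alpha>_add \<alpha>_scale \<open>t \<in> H\<close> by blast
qed

end

locale lie_alg =
  fixes sc :: "complex \<Rightarrow> 'g::ab_group_add \<Rightarrow> 'g" and br :: "'g \<Rightarrow> 'g \<Rightarrow> 'g"
  assumes lie: "lie_algebra sc br"
begin

sublocale V: vector_space sc
  using lie unfolding lie_algebra_def by auto

lemma ad_linear: "Vector_Spaces.linear sc sc (br x)"
  using lie unfolding lie_algebra_def by auto

lemma bracket_linear_left: "Vector_Spaces.linear sc sc (\<lambda>x. br x y)"
  using lie unfolding lie_algebra_def by auto

sublocale ad: Vector_Spaces.linear sc sc "br x" for x
  by (rule ad_linear)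

sublocale bracket_left: Vector_Spaces.linear sc sc "\<lambda>x. br x y" for y
  by (rule bracket_linear_left)

lemma bracket_self [simp]: "br x x = 0"
  using lie unfolding lie_algebra_def by auto

lemma bracket_antisym: "br x y = - br y x"
proof -
  have "0 = br (x + y) (x + y)" by simp
  also have "\<dots> = br x x + br y x + (br x y + br y y)" by (simp only: ad.add bracket_left.add)
  also have "\<dots> = br x y + br y x" by simp
  finally show ?thesis unfolding eq_neg_iff_add_eq_0 by (rule sym)
qed

lemma jacobi_derivation: "br x (br y z) = br y (br x z) + br (br x y) z"
proof -
  have "br x (br y z) + br y (br z x) + br z (br x y) = 0"
    using lie unfolding lie_algebra_def by auto
  moreover have "br y (br z x) = - br y (br x z)" by (metis bracket_antisym ad.neg)
  moreover have "br z (br x y) = - br (br x y) z" by (rule bracket_antisym)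
  ultimately show ?thesis by (simp add: algebra_simps eq_neg_iff_add_eq_0)
qed

lemma centralizer_generated_subalgebra:
  "centralizer br (generated_subalgebra sc br X) = centralizer br X"
proof
  show "centralizer br (generated_subalgebra sc br X) \<subseteq> centralizer br X"
    unfolding centralizer_def generated_subalgebra_def by blast
  show "centralizer br X \<subseteq> centralizer br (generated_subalgebra sc br X)"
  proof
    fix x assume x: "x \<in> centralizer br X"
    have "lie_subalgebra sc br {y. br x y = 0}"
      unfolding lie_subalgebra_def using ad.subspace_kernel jacobi_derivation[of x] by simp
    then have "generated_subalgebra sc br X \<subseteq> {y. br x y = 0}"
      using x unfolding generated_subalgebra_def centralizer_def by blast
    then show "x \<in> centralizer br (generated_subalgebra sc br X)"
      unfolding centralizer_def by blast
  qed
qed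

lemma heisenberg_string_nonzero:
  assumes "br x w = 0" "w \<noteq> 0" "c \<noteq> 0"
    and central: "\<And>m. br (br x y) ((br y ^^ m) w) = sc c ((br y ^^ m) w)"
  shows "(br y ^^ m) w \<noteq> 0"
proof -
  have lower: "br x ((br y ^^ Suc m) w) = sc (of_nat (Suc m) * c) ((br y ^^ m) w)" for m
  proof (induction m)
    case 0
    show ?case using jacobi_derivation[of x y w] assms(1) central[of 0] by simp
  next
    case (Suc m)
    let ?u = "(br y ^^ Suc m) w"
    have "br x (br y ?u) = br y (br x ?u) + sc c ?u"
      using jacobi_derivation[of x y ?u] central[of "Suc m"] by simp
    also have "\<dots> = sc (of_nat (Suc m) * c + c) ?u"
      using Suc by (simp add: ad.scale V.scale_left_distrib)
    finally show ?case by (simp add: algebra_simps)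
  qed
  show ?thesis
  proof (induction m)
    case 0
    then show ?case using assms(2) by simp
  next
    case (Suc m)
    then show ?case using lower[of m] assms(3) by (auto simp del: of_nat_Suc)
  qed
qed

definition sl2_triple :: "'g \<Rightarrow> 'g \<Rightarrow> 'g \<Rightarrow> bool" where
  "sl2_triple e f h \<longleftrightarrow> br e f = h \<and> br h e = sc 2 e \<and> br h f = sc (-2) f"

lemma ad_power_eigenvector:
  assumes "br h e = sc c e" "br h v = sc l v"
  shows "br h ((br e ^^ k) v) = sc (l + of_nat k * c) ((br e ^^ k) v)"
proof (induction k)
  case 0
  then show ?case using assms(2) by simp
next
  case (Suc k)
  let ?u = "(br e ^^ k) v"
  have "br h (br e ?u) = br e (br h ?u) + br (br h e) ?u" by (rule jacobi_derivation)
  also have "\<dots> = sc (l + of_nat k * c + c) (br e ?u)"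
    using Suc assms(1) by (simp add: ad.scale bracket_left.scale V.scale_left_distrib ad.add)
  finally show ?case by (simp add: algebra_simps)
qed

(* v need not be a highest weight vector: f (e v) = 0 already gives
   e (f^(k+1) v) = (k+1) (l-k) f^k v, so l = N for the last N with f^N v \<noteq> 0. *)
lemma sl2_weight_nat:
  assumes "sl2_triple e f h" "locally_nilpotent (br f)"
    and v: "br h v = sc l v" "v \<noteq> 0" and "br f (br e v) = 0"
  shows "\<exists>N::nat. l = of_nat N"
proof -
  have ef: "br e f = h" and hf: "br h f = sc (-2) f"
    using assms(1) unfolding sl2_triple_def by auto
  have raise: "br e ((br f ^^ Suc k) v) = sc (of_nat (Suc k) * (l - of_nat k)) ((br f ^^ k) v)" for k
  proof (induction k)
    case 0
    show ?case using jacobi_derivation[of e f v] assms(5) ef v(1) by simp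
  next
    case (Suc k)
    let ?u = "(br f ^^ Suc k) v"
    have "br e (br f ?u) = br f (br e ?u) + br (br e f) ?u" by (rule jacobi_derivation)
    also have "\<dots> = sc (of_nat (Suc k) * (l - of_nat k) + (l + of_nat (Suc k) * -2)) ?u"
      using Suc ef ad_power_eigenvector[OF hf v(1), of "Suc k"]
      by (simp add: ad.scale V.scale_left_distrib del: of_nat_Suc)
    also have "of_nat (Suc k) * (l - of_nat k) + (l + of_nat (Suc k) * -2)
        = of_nat (Suc (Suc k)) * (l - of_nat (Suc k))"
      by (simp add: algebra_simps)
    finally show ?case by simp
  qed
  obtain n where "(br f ^^ n) v = 0"
    using assms(2) unfolding locally_nilpotent_def by blast
  then obtain N where N: "(br f ^^ N) v \<noteq> 0" "(br f ^^ Suc N) v = 0"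
    using funpow_last_nonzero v(2) by metis
  have "sc (of_nat (Suc N) * (l - of_nat N)) ((br f ^^ N) v) = 0"
    using raise[of N] N(2) by simp
  then have "l = of_nat N" using N(1) by (simp del: of_nat_Suc)
  then show ?thesis by blast
qed

lemma sl2_weight_int:
  assumes "sl2_triple e f h" "locally_nilpotent (br e)" "locally_nilpotent (br f)"
    and v: "br h v = sc l v" "v \<noteq> 0"
  shows "\<exists>z::int. l = of_int z"
proof -
  have he: "br h e = sc 2 e" using assms(1) unfolding sl2_triple_def by auto
  obtain n where "(br e ^^ n) v = 0"
    using assms(2) unfolding locally_nilpotent_def by blast
  then obtain m where m: "(br e ^^ m) v \<noteq> 0" "(br e ^^ Suc m) v = 0"
    using funpow_last_nonzero v(2) by metis
  have "\<exists>N::nat. l + of_nat m * 2 = of_nat N"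
    using sl2_weight_nat[OF assms(1,3) ad_power_eigenvector[OF he v(1)] m(1)] m(2) by simp
  then obtain N :: nat where "l + of_nat m * 2 = of_nat N" by blast
  then have "l = of_int (int N - 2 * int m)" by (simp add: algebra_simps)
  then show ?thesis by blast
qed

lemma sl2_lower_raise_nonzero:
  assumes "sl2_triple e f h" "locally_nilpotent (br f)" "br h v = sc (-2) v" "v \<noteq> 0"
  shows "br f (br e v) \<noteq> 0"
proof
  assume "br f (br e v) = 0"
  then obtain N :: nat where "(-2::complex) = of_nat N"
    using sl2_weight_nat[OF assms] by blast
  then have "Re (-2::complex) = Re (of_nat N)" by simp
  then show False by simp
qed

end

locale quadratic_lie_alg = lie_alg +
  fixes B
  assumes form: "GR1 sc br B"
begin

lemma form_linear_left: "Vector_Spaces.linear sc (*) (\<lambda>x. B x y)"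
  using form unfolding GR1_def by auto

lemma form_linear_right: "Vector_Spaces.linear sc (*) (B x)"
  using form unfolding GR1_def by auto

sublocale form_left: Vector_Spaces.linear sc "(*)" "\<lambda>x. B x y" for y
  by (rule form_linear_left)

sublocale form_right: Vector_Spaces.linear sc "(*)" "B x" for x
  by (rule form_linear_right)

lemma form_sym: "B x y = B y x"
  using form unfolding GR1_def by auto

lemma form_nondegenerate: "(\<And>y. B x y = 0) \<Longrightarrow> x = 0"
  using form unfolding GR1_def by auto

lemma form_invariant: "B (br x y) z = B x (br y z)"
  using form unfolding GR1_def by auto

lemma form_ad_eigenvectors_orthogonal:
  assumes "br s x = sc a x" "br s y = sc b y" "a + b \<noteq> 0"
  shows "B x y = 0"
proof -
  have "a * B x y = B (br s x) y" using assms(1) by (simp add: form_left.scale)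
  also have "\<dots> = - B x (br s y)"
    using bracket_antisym[of s x] by (simp add: form_left.neg form_invariant)
  also have "\<dots> = - (b * B x y)" using assms(2) by (simp add: form_right.scale)
  finally have "(a + b) * B x y = 0" by (simp add: algebra_simps)
  with assms(3) show ?thesis by simp
qed

end

locale split_quadratic_lie_alg = quadratic_lie_alg +
  fixes H
  assumes cartan: "GR2 sc br H"
begin

abbreviation G where
  "G \<equiv> root_space sc br H"

abbreviation Hdual where
  "Hdual \<equiv> dual_space sc H"

lemma H_subspace: "V.subspace H"
  using cartan unfolding GR2_def lie_subalgebra_def by auto

lemma H_finite_span: obtains S where "finite S" "V.span S = H"
  using cartan unfolding GR2_def by auto

lemma H_abelian: "h \<in> H \<Longrightarrow> k \<in> H \<Longrightarrow> br h k = 0"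
  using cartan unfolding GR2_def by auto

lemma ad_H_diagonalizable: "h \<in> H \<Longrightarrow> V.span {x. \<exists>c. br h x = sc c x} = UNIV"
  using cartan unfolding GR2_def by auto

lemma mem_root_space: "x \<in> G \<alpha> \<longleftrightarrow> (\<forall>h\<in>H. br h x = sc (\<alpha> h) x)"
  unfolding root_space_def by simp

lemma root_space_subspace: "V.subspace (G \<alpha>)"
  unfolding V.subspace_def root_space_def
  by (auto simp: ad.add ad.scale V.scale_right_distrib V.scale_left_commute)

lemma root_space_zero: "G (\<lambda>_. 0) = H"
proof -
  have "br h x = 0 \<longleftrightarrow> br x h = 0" for h x
    using bracket_antisym[of h x] by simp
  then have "G (\<lambda>_. 0) = centralizer br H"
    unfolding root_space_def centralizer_def by auto
  then show ?thesis using cartan unfolding GR2_def by simp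
qed

lemma root_space_bracket:
  assumes "x \<in> G \<beta>" "z \<in> G \<alpha>"
  shows "br x z \<in> G (\<lambda>h. \<beta> h + \<alpha> h)"
  unfolding mem_root_space
proof
  fix h assume "h \<in> H"
  have "br h (br x z) = br x (br h z) + br (br h x) z" by (rule jacobi_derivation)
  also have "\<dots> = sc (\<beta> h + \<alpha> h) (br x z)"
    using assms \<open>h \<in> H\<close> by (simp add: mem_root_space ad.scale bracket_left.scale V.scale_left_distrib)
  finally show "br h (br x z) = sc (\<beta> h + \<alpha> h) (br x z)" .
qed

lemma dual_space_add: "\<alpha> \<in> Hdual \<Longrightarrow> h \<in> H \<Longrightarrow> k \<in> H \<Longrightarrow> \<alpha> (h + k) = \<alpha> h + \<alpha> k"
  unfolding dual_space_def by auto

lemma dual_space_scale: "\<alpha> \<in> Hdual \<Longrightarrow> h \<in> H \<Longrightarrow> \<alpha> (sc c h) = c * \<alpha> h"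
  unfolding dual_space_def by auto

lemma dual_space_lincomb: "\<alpha> \<in> Hdual \<Longrightarrow> \<beta> \<in> Hdual \<Longrightarrow> (\<lambda>h. a * \<alpha> h + b * \<beta> h) \<in> Hdual"
  unfolding dual_space_def by (simp add: distrib_left mult.left_commute)

(* Take the component of y in the (-\<delta> s0)-eigenspace of ad s0: the other components are
   B-orthogonal to x, and it stays an eigenvector of each ad s, s \<in> F, since ad s commutes
   with ad s0. *)
lemma root_space_pairing_step:
  assumes x: "x \<in> G \<delta>" and "s0 \<in> H" "F \<subseteq> H"
    and y: "B x y \<noteq> 0" "\<And>s. s \<in> F \<Longrightarrow> br s y = sc (- \<delta> s) y"
  obtains y' where "B x y' \<noteq> 0" "\<And>s. s \<in> insert s0 F \<Longrightarrow> br s y' = sc (- \<delta> s) y'"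
proof -
  obtain M w where M: "finite M" and w_eigen: "\<And>\<mu>. br s0 (w \<mu>) = sc \<mu> (w \<mu>)"
    and w_out: "\<And>\<mu>. \<mu> \<notin> M \<Longrightarrow> w \<mu> = 0" and w_sum: "sum w M = y"
    using V.eigenspace_decomposition[OF ad_linear ad_H_diagonalizable[OF \<open>s0 \<in> H\<close>]] by metis
  define y' where "y' = w (- \<delta> s0)"
  have x_eigen: "br s0 x = sc (\<delta> s0) x" using x \<open>s0 \<in> H\<close> by (simp add: mem_root_space)
  have "B x (w \<mu>) = 0" if "\<mu> \<noteq> - \<delta> s0" for \<mu>
    using that by (intro form_ad_eigenvectors_orthogonal[OF x_eigen w_eigen])
      (metis add.commute eq_neg_iff_add_eq_0)
  then have "B x y = (\<Sum>\<mu>\<in>M. if \<mu> = - \<delta> s0 then B x y' else 0)"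
    unfolding w_sum[symmetric] form_right.sum y'_def by (intro sum.cong) auto
  also have "\<dots> = B x y'"
    using M w_out[of "- \<delta> s0"] by (simp add: y'_def form_right.zero)
  finally have "B x y' \<noteq> 0" using y(1) by simp
  moreover have "br s y' = sc (- \<delta> s) y'" if "s \<in> F" for s
  proof (cases "- \<delta> s0 \<in> M")
    case True
    define T where "T v = br s v - sc (- \<delta> s) v" for v
    have "T (w (- \<delta> s0)) = 0"
    proof (rule V.eigencomponents_in_kernel[OF ad_linear _ _ M w_eigen _ True])
      show "Vector_Spaces.linear sc sc T"
        unfolding T_def Vector_Spaces.linear_iff using V.vector_space_axioms
        by (simp add: ad.add ad.scale V.scale_right_distrib V.scale_right_diff_distrib
            V.scale_scale mult.commute)
      have "br s0 s = 0" using H_abelian \<open>s0 \<in> H\<close> \<open>F \<subseteq> H\<close> that by blast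
      then show "br s0 (T v) = T (br s0 v)" for v
        using jacobi_derivation[of s0 s v]
        by (simp add: T_def ad.add ad.scale)
      show "T (sum w M) = 0" using y(2)[OF that] by (simp add: T_def w_sum)
    qed
    then show ?thesis unfolding T_def y'_def by (simp add: eq_neg_iff_add_eq_0)
  next
    case False
    then show ?thesis by (simp add: y'_def w_out)
  qed
  moreover have "br s0 y' = sc (- \<delta> s0) y'" by (simp add: y'_def w_eigen)
  ultimately show ?thesis using that by blast
qed

lemma root_space_pairing:
  assumes "\<delta> \<in> Hdual" "x \<in> G \<delta>" "B x g \<noteq> 0"
  obtains y where "y \<in> G (\<lambda>h. - \<delta> h)" "B x y \<noteq> 0"
proof -
  obtain S where S: "finite S" "V.span S = H" using H_finite_span by blast
  have "S \<subseteq> H" using S(2) V.span_superset by blast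
  have "\<exists>y. B x y \<noteq> 0 \<and> (\<forall>s\<in>F. br s y = sc (- \<delta> s) y)" if "F \<subseteq> S" for F
  proof -
    have "finite F" "F \<subseteq> H" using that S(1) \<open>S \<subseteq> H\<close> finite_subset by auto
    then show ?thesis
    proof (induction F rule: finite_induct)
      case empty
      then show ?case using assms(3) by auto
    next
      case (insert s0 F)
      then have "s0 \<in> H" "F \<subseteq> H" by auto
      from insert obtain y where y: "B x y \<noteq> 0" "\<And>s. s \<in> F \<Longrightarrow> br s y = sc (- \<delta> s) y"
        by auto
      obtain y' where "B x y' \<noteq> 0" "\<And>s. s \<in> insert s0 F \<Longrightarrow> br s y' = sc (- \<delta> s) y'"
        using root_space_pairing_step[OF assms(2) \<open>s0 \<in> H\<close> \<open>F \<subseteq> H\<close> y] by blast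
      then show ?case by blast
    qed
  qed
  then obtain y where y: "B x y \<noteq> 0" "\<forall>s\<in>S. br s y = sc (- \<delta> s) y" by blast
  have "\<delta> 0 = 0"
    using dual_space_scale[OF assms(1), of 0 0] H_subspace V.subspace_0 by simp
  then have "V.subspace {h \<in> H. br h y = sc (- \<delta> h) y}"
    using H_subspace unfolding V.subspace_def
    by (simp add: bracket_left.add bracket_left.scale dual_space_add[OF assms(1)]
        dual_space_scale[OF assms(1)] V.scale_left_distrib)
  moreover have "S \<subseteq> {h \<in> H. br h y = sc (- \<delta> h) y}"
    using y(2) \<open>S \<subseteq> H\<close> by blast
  ultimately have "H \<subseteq> {h \<in> H. br h y = sc (- \<delta> h) y}"
    using V.span_minimal S(2) by blast
  then have "y \<in> G (\<lambda>h. - \<delta> h)" unfolding mem_root_space by blast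
  with y(1) show ?thesis using that by blast
qed

lemma form_nondegenerate_on_H:
  assumes "t \<in> H" "\<And>h. h \<in> H \<Longrightarrow> B t h = 0"
  shows "t = 0"
proof (rule ccontr)
  assume "t \<noteq> 0"
  then obtain g where "B t g \<noteq> 0" using form_nondegenerate by blast
  have "t \<in> G (\<lambda>_. 0)" using root_space_zero assms(1) by simp
  have "(\<lambda>_. 0) \<in> Hdual" unfolding dual_space_def by simp
  then obtain y where "y \<in> G (\<lambda>h. - 0)" "B t y \<noteq> 0"
    by (rule root_space_pairing[OF _ \<open>t \<in> G (\<lambda>_. 0)\<close> \<open>B t g \<noteq> 0\<close>])
  then show False using root_space_zero assms(2) by simp
qed

lemma tvec_exists:
  assumes "\<alpha> \<in> Hdual"
  shows "\<exists>t\<in>H. \<forall>h\<in>H. B t h = \<alpha> h"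
proof -
  obtain S where "finite S" "V.span S = H" by (rule H_finite_span)
  then show ?thesis
    by (rule V.bilinear_form_represents_functional[OF _ _ form_linear_left form_linear_right
          form_nondegenerate_on_H dual_space_add[OF assms] dual_space_scale[OF assms]])
qed

lemma tvec_unique:
  assumes "t \<in> H" "u \<in> H" "\<And>h. h \<in> H \<Longrightarrow> B t h = B u h"
  shows "t = u"
proof -
  have "t - u \<in> H" using assms(1,2) H_subspace V.subspace_diff by blast
  moreover have "B (t - u) h = 0" if "h \<in> H" for h
    using assms(3)[OF that] by (simp add: form_left.diff)
  ultimately have "t - u = 0" by (rule form_nondegenerate_on_H)
  then show ?thesis by simp
qed

lemma tvec_spec:
  assumes "\<alpha> \<in> Hdual"
  shows "tvec B H \<alpha> \<in> H \<and> (\<forall>h\<in>H. B (tvec B H \<alpha>) h = \<alpha> h)"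
  unfolding tvec_def
proof (rule theI')
  obtain t where t: "t \<in> H" "\<forall>h\<in>H. B t h = \<alpha> h"
    using tvec_exists[OF assms] by blast
  show "\<exists>!t. t \<in> H \<and> (\<forall>h\<in>H. B t h = \<alpha> h)"
  proof (rule ex1I[of _ t])
    fix u assume "u \<in> H \<and> (\<forall>h\<in>H. B u h = \<alpha> h)"
    then show "u = t" using t by (intro tvec_unique) auto
  qed (use t in blast)
qed

lemma tvec_in_H: "\<alpha> \<in> Hdual \<Longrightarrow> tvec B H \<alpha> \<in> H"
  using tvec_spec by blast

lemma form_tvec: "\<alpha> \<in> Hdual \<Longrightarrow> h \<in> H \<Longrightarrow> B (tvec B H \<alpha>) h = \<alpha> h"
  using tvec_spec by blast

lemma root_form_eq: "\<alpha> \<in> Hdual \<Longrightarrow> \<beta> \<in> Hdual \<Longrightarrow> root_form B H \<alpha> \<beta> = \<alpha> (tvec B H \<beta>)"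
  unfolding root_form_def by (simp add: form_tvec tvec_in_H)

lemma root_form_sym: "root_form B H \<alpha> \<beta> = root_form B H \<beta> \<alpha>"
  unfolding root_form_def by (rule form_sym)

lemma root_form_lincomb_left:
  assumes "\<alpha> \<in> Hdual" "\<beta> \<in> Hdual" "\<gamma> \<in> Hdual"
  shows "root_form B H (\<lambda>h. a * \<alpha> h + b * \<beta> h) \<gamma> = a * root_form B H \<alpha> \<gamma> + b * root_form B H \<beta> \<gamma>"
  using assms by (simp add: root_form_eq dual_space_lincomb)

lemma root_form_isotropic_string:
  assumes "\<alpha> \<in> Hdual" "\<delta> \<in> Hdual" "root_form B H \<delta> \<delta> = 0"
  shows "root_form B H (\<lambda>h. \<alpha> h + c * \<delta> h) \<delta> = root_form B H \<alpha> \<delta>"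
    and "root_form B H (\<lambda>h. \<alpha> h + c * \<delta> h) \<alpha> = root_form B H \<alpha> \<alpha> + c * root_form B H \<alpha> \<delta>"
    and "root_form B H (\<lambda>h. \<alpha> h + c * \<delta> h) (\<lambda>h. \<alpha> h + c * \<delta> h)
      = root_form B H \<alpha> \<alpha> + c * (2 * root_form B H \<alpha> \<delta>)"
proof -
  let ?\<beta> = "\<lambda>h. \<alpha> h + c * \<delta> h"
  have \<beta>_form: "root_form B H ?\<beta> \<gamma> = root_form B H \<alpha> \<gamma> + c * root_form B H \<delta> \<gamma>"
    if "\<gamma> \<in> Hdual" for \<gamma>
    using root_form_lincomb_left[OF assms(1,2) that, of 1 c] by simp
  show \<beta>_\<delta>: "root_form B H ?\<beta> \<delta> = root_form B H \<alpha> \<delta>"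
    using \<beta>_form[OF assms(2)] assms(3) by simp
  show \<beta>_\<alpha>: "root_form B H ?\<beta> \<alpha> = root_form B H \<alpha> \<alpha> + c * root_form B H \<alpha> \<delta>"
    using \<beta>_form[OF assms(1)] by (simp only: root_form_sym[of \<delta> \<alpha>])
  have "?\<beta> \<in> Hdual" using dual_space_lincomb[OF assms(1,2), of 1 c] by simp
  then have "root_form B H ?\<beta> ?\<beta> = root_form B H ?\<beta> \<alpha> + c * root_form B H ?\<beta> \<delta>"
    using \<beta>_form by (simp only: root_form_sym[of \<alpha> ?\<beta>] root_form_sym[of \<delta> ?\<beta>])
  also have "\<dots> = root_form B H \<alpha> \<alpha> + c * (2 * root_form B H \<alpha> \<delta>)"
    unfolding \<beta>_\<alpha> \<beta>_\<delta> by (simp only: mult_2 distrib_left add.assoc)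
  finally show "root_form B H ?\<beta> ?\<beta> = root_form B H \<alpha> \<alpha> + c * (2 * root_form B H \<alpha> \<delta>)" .
qed

lemma bracket_tvec_root_space:
  assumes "\<gamma> \<in> Hdual" "\<delta> \<in> Hdual" "w \<in> G \<gamma>"
  shows "br (tvec B H \<delta>) w = sc (root_form B H \<gamma> \<delta>) w"
  using assms tvec_in_H[OF assms(2)] by (simp add: mem_root_space root_form_eq)

definition coroot where
  "coroot \<beta> = sc (2 / root_form B H \<beta> \<beta>) (tvec B H \<beta>)"

lemma coroot_in_H: "\<beta> \<in> Hdual \<Longrightarrow> coroot \<beta> \<in> H"
  unfolding coroot_def using tvec_in_H H_subspace V.subspace_scale by blast

lemma dual_space_coroot:
  "\<gamma> \<in> Hdual \<Longrightarrow> \<beta> \<in> Hdual \<Longrightarrow> \<gamma> (coroot \<beta>) = 2 * root_form B H \<gamma> \<beta> / root_form B H \<beta> \<beta>"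
  unfolding coroot_def by (simp add: dual_space_scale tvec_in_H root_form_eq)

lemma roots_in_dual: "\<alpha> \<in> roots sc br H \<Longrightarrow> \<alpha> \<in> Hdual"
  unfolding roots_def by simp

lemma root_vector_exists:
  assumes "\<alpha> \<in> roots sc br H"
  obtains x where "x \<in> G \<alpha>" "x \<noteq> 0"
proof -
  have "G \<alpha> \<noteq> {0}" using assms unfolding roots_def by simp
  moreover have "0 \<in> G \<alpha>" by (rule V.subspace_0[OF root_space_subspace])
  ultimately show ?thesis using that by blast
qed

lemma rootsI: "\<alpha> \<in> Hdual \<Longrightarrow> x \<in> G \<alpha> \<Longrightarrow> x \<noteq> 0 \<Longrightarrow> \<alpha> \<in> roots sc br H"
  unfolding roots_def by auto

lemma bracket_opposite_root_spaces:
  assumes "\<delta> \<in> Hdual" "x \<in> G \<delta>" "y \<in> G (\<lambda>h. - \<delta> h)"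
  shows "br x y = sc (B x y) (tvec B H \<delta>)"
proof (rule tvec_unique)
  have "br x y \<in> G (\<lambda>h. \<delta> h + - \<delta> h)" by (rule root_space_bracket[OF assms(2,3)])
  then show "br x y \<in> H" using root_space_zero by simp
  show "sc (B x y) (tvec B H \<delta>) \<in> H"
    using tvec_in_H[OF assms(1)] H_subspace V.subspace_scale by blast
  fix h assume "h \<in> H"
  have "B (br x y) h = B x (br y h)" by (rule form_invariant)
  also have "\<dots> = - B x (br h y)" using bracket_antisym[of y h] by (simp add: form_right.neg)
  also have "\<dots> = B x y * \<delta> h"
    using assms(3) \<open>h \<in> H\<close> by (simp add: mem_root_space form_right.scale form_right.neg)
  also have "\<dots> = B (sc (B x y) (tvec B H \<delta>)) h"
    using form_tvec[OF assms(1) \<open>h \<in> H\<close>] by (simp add: form_left.scale)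
  finally show "B (br x y) h = B (sc (B x y) (tvec B H \<delta>)) h" .
qed

lemma roots_uminus:
  assumes "\<alpha> \<in> roots sc br H"
  shows "(\<lambda>h. - \<alpha> h) \<in> roots sc br H"
proof -
  have \<alpha>: "\<alpha> \<in> Hdual" using assms by (rule roots_in_dual)
  obtain x where x: "x \<in> G \<alpha>" "x \<noteq> 0" using assms by (rule root_vector_exists)
  then obtain g where "B x g \<noteq> 0" using form_nondegenerate by blast
  then obtain y where y: "y \<in> G (\<lambda>h. - \<alpha> h)" "B x y \<noteq> 0"
    by (rule root_space_pairing[OF \<alpha> x(1)])
  have "(\<lambda>h. - \<alpha> h) \<in> Hdual" using dual_space_lincomb[OF \<alpha> \<alpha>, of "-1" 0] by simp
  moreover have "y \<noteq> 0" using y(2) by (auto simp: form_right.zero)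
  ultimately show ?thesis using rootsI y(1) by blast
qed

lemma nonisotropic_roots_uminus:
  assumes "\<alpha> \<in> nonisotropic_roots sc br B H"
  shows "(\<lambda>h. - \<alpha> h) \<in> nonisotropic_roots sc br B H"
proof -
  have \<alpha>: "\<alpha> \<in> roots sc br H" "root_form B H \<alpha> \<alpha> \<noteq> 0"
    using assms unfolding nonisotropic_roots_def by auto
  have "\<alpha> \<in> Hdual" using \<alpha>(1) by (rule roots_in_dual)
  have neg: "root_form B H (\<lambda>h. - \<alpha> h) \<gamma> = - root_form B H \<alpha> \<gamma>" if "\<gamma> \<in> Hdual" for \<gamma>
    using root_form_lincomb_left[OF \<open>\<alpha> \<in> Hdual\<close> \<open>\<alpha> \<in> Hdual\<close> that, of "-1" 0] by simp
  have "(\<lambda>h. - \<alpha> h) \<in> Hdual"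
    using dual_space_lincomb[OF \<open>\<alpha> \<in> Hdual\<close> \<open>\<alpha> \<in> Hdual\<close>, of "-1" 0] by simp
  then have "root_form B H (\<lambda>h. - \<alpha> h) (\<lambda>h. - \<alpha> h) = - root_form B H (\<lambda>h. - \<alpha> h) \<alpha>"
    using neg root_form_sym by metis
  also have "\<dots> = root_form B H \<alpha> \<alpha>" using neg[OF \<open>\<alpha> \<in> Hdual\<close>] by simp
  finally have "root_form B H (\<lambda>h. - \<alpha> h) (\<lambda>h. - \<alpha> h) = root_form B H \<alpha> \<alpha>" .
  then show ?thesis
    using roots_uminus[OF \<alpha>(1)] \<alpha>(2) unfolding nonisotropic_roots_def by simp
qed

lemma root_vector_pair:
  assumes "\<delta> \<in> roots sc br H"
  obtains x y where "x \<in> G \<delta>" "y \<in> G (\<lambda>h. - \<delta> h)" "B x y = c"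
proof -
  obtain x where x: "x \<in> G \<delta>" "x \<noteq> 0" using assms by (rule root_vector_exists)
  then obtain g where "B x g \<noteq> 0" using form_nondegenerate by blast
  then obtain y where y: "y \<in> G (\<lambda>h. - \<delta> h)" "B x y \<noteq> 0"
    by (rule root_space_pairing[OF roots_in_dual[OF assms] x(1)])
  have "sc (c / B x y) y \<in> G (\<lambda>h. - \<delta> h)"
    using y(1) root_space_subspace V.subspace_scale by blast
  moreover have "B x (sc (c / B x y) y) = c" using y(2) by (simp add: form_right.scale)
  ultimately show ?thesis using that x(1) by blast
qed

lemma root_space_ad_power:
  assumes "x \<in> G \<delta>" "w \<in> G \<beta>"
  shows "(br x ^^ n) w \<in> G (\<lambda>h. \<beta> h + of_nat n * \<delta> h)"
proof (induction n)
  case 0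
  then show ?case using assms(2) by simp
next
  case (Suc n)
  then have "br x ((br x ^^ n) w) \<in> G (\<lambda>h. \<delta> h + (\<beta> h + of_nat n * \<delta> h))"
    by (rule root_space_bracket[OF assms(1)])
  moreover have "(\<lambda>h. \<delta> h + (\<beta> h + of_nat n * \<delta> h)) = (\<lambda>h. \<beta> h + of_nat (Suc n) * \<delta> h)"
    by (simp add: fun_eq_iff algebra_simps)
  ultimately show ?case by simp
qed

lemma root_space_subset_core: "\<alpha> \<in> nonisotropic_roots sc br B H \<Longrightarrow> G \<alpha> \<subseteq> core sc br B H"
  unfolding core_def generated_subalgebra_def by blast

lemma nonisotropic_root_sl2_triple:
  assumes G3: "GR3 sc br B H" and \<beta>: "\<beta> \<in> nonisotropic_roots sc br B H"
  obtains e f where "e \<in> G \<beta>" "f \<in> G (\<lambda>h. - \<beta> h)" "sl2_triple e f (coroot \<beta>)"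
    "locally_nilpotent (br e)" "locally_nilpotent (br f)"
proof -
  have \<beta>_root: "\<beta> \<in> roots sc br H" and "root_form B H \<beta> \<beta> \<noteq> 0"
    using \<beta> unfolding nonisotropic_roots_def by auto
  have \<beta>_dual: "\<beta> \<in> Hdual" using \<beta>_root by (rule roots_in_dual)
  obtain e f where e: "e \<in> G \<beta>" and f: "f \<in> G (\<lambda>h. - \<beta> h)" and "B e f = 2 / root_form B H \<beta> \<beta>"
    using \<beta>_root by (rule root_vector_pair)
  then have ef: "br e f = coroot \<beta>"
    using bracket_opposite_root_spaces[OF \<beta>_dual e f] by (simp add: coroot_def)
  have "\<beta> (coroot \<beta>) = 2"
    using dual_space_coroot[OF \<beta>_dual \<beta>_dual] \<open>root_form B H \<beta> \<beta> \<noteq> 0\<close> by simp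
  then have "br (coroot \<beta>) e = sc 2 e" "br (coroot \<beta>) f = sc (-2) f"
    using e f coroot_in_H[OF \<beta>_dual] unfolding mem_root_space by auto
  moreover have "locally_nilpotent (br e)" "locally_nilpotent (br f)"
    using G3 \<beta> nonisotropic_roots_uminus[OF \<beta>] e f
    unfolding GR3_def locally_nilpotent_def by blast+
  ultimately show ?thesis using that e f ef unfolding sl2_triple_def by blast
qed

lemma coroot_weight_integral:
  assumes G3: "GR3 sc br B H" and \<beta>: "\<beta> \<in> nonisotropic_roots sc br B H"
    and \<gamma>: "\<gamma> \<in> Hdual" and v: "v \<in> G \<gamma>" "v \<noteq> 0"
  shows "\<exists>z::int. 2 * root_form B H \<gamma> \<beta> / root_form B H \<beta> \<beta> = of_int z"
proof -
  have \<beta>_dual: "\<beta> \<in> Hdual" using \<beta> unfolding nonisotropic_roots_def by (auto intro: roots_in_dual)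
  obtain e f where "sl2_triple e f (coroot \<beta>)" "locally_nilpotent (br e)" "locally_nilpotent (br f)"
    using nonisotropic_root_sl2_triple[OF G3 \<beta>] by metis
  moreover have "br (coroot \<beta>) v = sc (\<gamma> (coroot \<beta>)) v"
    using v(1) coroot_in_H[OF \<beta>_dual] unfolding mem_root_space by blast
  ultimately show ?thesis using sl2_weight_int v(2) dual_space_coroot[OF \<gamma> \<beta>_dual] by metis
qed

lemma nonisotropic_root_norm_le:
  assumes G3: "GR3 sc br B H" and \<beta>: "\<beta> \<in> nonisotropic_roots sc br B H"
    and \<gamma>: "\<gamma> \<in> roots sc br H" and "root_form B H \<beta> \<gamma> \<noteq> 0"
  shows "cmod (root_form B H \<beta> \<beta>) \<le> 2 * cmod (root_form B H \<beta> \<gamma>)"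
proof -
  have q: "root_form B H \<beta> \<beta> \<noteq> 0" using \<beta> unfolding nonisotropic_roots_def by simp
  obtain v where "v \<in> G \<gamma>" "v \<noteq> 0" using \<gamma> by (rule root_vector_exists)
  then obtain z :: int where z: "2 * root_form B H \<beta> \<gamma> / root_form B H \<beta> \<beta> = of_int z"
    using coroot_weight_integral[OF G3 \<beta> roots_in_dual[OF \<gamma>]] by (metis root_form_sym)
  then have "z \<noteq> 0" using assms(4) q by auto
  then have "1 \<le> cmod (of_int z :: complex)" by simp
  also have "\<dots> = 2 * cmod (root_form B H \<beta> \<gamma>) / cmod (root_form B H \<beta> \<beta>)"
    unfolding z[symmetric] by (simp add: norm_divide norm_mult)
  finally show ?thesis using q by (simp add: field_simps)
qed

lemma isotropic_root_string_infinite: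
  assumes \<alpha>: "\<alpha> \<in> roots sc br H" and \<delta>: "\<delta> \<in> isotropic_roots sc br B H"
    and "root_form B H \<alpha> \<delta> \<noteq> 0"
  shows "infinite {k::int. (\<lambda>h. \<alpha> h + of_int k * \<delta> h) \<in> roots sc br H}"
proof -
  define c where "c = root_form B H \<alpha> \<delta>"
  define \<beta> where "\<beta> k = (\<lambda>h. \<alpha> h + of_int k * \<delta> h)" for k :: int
  define K where "K = {k. \<beta> k \<in> roots sc br H}"
  have \<delta>_root: "\<delta> \<in> roots sc br H" and "root_form B H \<delta> \<delta> = 0"
    using \<delta> unfolding isotropic_roots_def by auto
  have \<alpha>_dual: "\<alpha> \<in> Hdual" and \<delta>_dual: "\<delta> \<in> Hdual"
    using \<alpha> \<delta>_root by (auto intro: roots_in_dual)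
  have \<beta>_dual: "\<beta> k \<in> Hdual" for k
    using dual_space_lincomb[OF \<alpha>_dual \<delta>_dual, of 1 "of_int k"] unfolding \<beta>_def by simp
  have in_K: "k \<in> K" if "w \<in> G (\<beta> k)" "w \<noteq> 0" for w k
    using rootsI[OF \<beta>_dual that] unfolding K_def by simp
  obtain x y where x: "x \<in> G \<delta>" and y: "y \<in> G (\<lambda>h. - \<delta> h)" and "B x y = 1"
    using \<delta>_root by (rule root_vector_pair)
  then have "br x y = tvec B H \<delta>" using bracket_opposite_root_spaces[OF \<delta>_dual x y] by simp
  then have central: "br (br x y) w = sc c w" if "w \<in> G (\<beta> k)" for w k
    using bracket_tvec_root_space[OF \<beta>_dual \<delta>_dual that] unfolding \<beta>_def c_def
    by (simp add: root_form_isotropic_string(1)[OF \<alpha>_dual \<delta>_dual \<open>root_form B H \<delta> \<delta> = 0\<close>])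
  obtain z where z: "z \<in> G \<alpha>" "z \<noteq> 0" using \<alpha> by (rule root_vector_exists)
  have x_power: "(br x ^^ n) z \<in> G (\<beta> (int n))" for n
    using root_space_ad_power[OF x z(1)] unfolding \<beta>_def by simp
  have "\<exists>f::nat \<Rightarrow> int. inj f \<and> range f \<subseteq> K"
  proof (cases "\<forall>n. (br x ^^ n) z \<noteq> 0")
    case True
    then have "range int \<subseteq> K" using in_K x_power by blast
    then show ?thesis using inj_of_nat by blast
  next
    case False
    then obtain N where N: "(br x ^^ N) z \<noteq> 0" "(br x ^^ Suc N) z = 0"
      using funpow_last_nonzero z(2) by metis
    define w where "w = (br x ^^ N) z"
    have y_power: "(br y ^^ m) w \<in> G (\<beta> (int N - int m))" for m
      using root_space_ad_power[OF y x_power[of N], of m]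
      unfolding w_def \<beta>_def by (simp add: algebra_simps)
    have "(br y ^^ m) w \<noteq> 0" for m
    proof (rule heisenberg_string_nonzero)
      show "br x w = 0" "w \<noteq> 0" using N unfolding w_def by simp_all
      show "c \<noteq> 0" using assms(3) unfolding c_def .
      show "br (br x y) ((br y ^^ m) w) = sc c ((br y ^^ m) w)" for m
        using central[OF y_power] .
    qed
    then have "range (\<lambda>m. int N - int m) \<subseteq> K" using in_K y_power by blast
    moreover have "inj (\<lambda>m::nat. int N - int m)" by (auto simp: inj_def)
    ultimately show ?thesis by blast
  qed
  then show ?thesis unfolding K_def \<beta>_def infinite_iff_countable_subset .
qed

lemma isotropic_root_orthogonal:
  assumes G3: "GR3 sc br B H" and \<alpha>: "\<alpha> \<in> roots sc br H" and \<delta>: "\<delta> \<in> isotropic_roots sc br B H"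
  shows "root_form B H \<alpha> \<delta> = 0"
proof (rule ccontr)
  let ?A = "root_form B H \<alpha> \<alpha>" and ?c = "root_form B H \<alpha> \<delta>"
  assume "?c \<noteq> 0"
  define \<beta> where "\<beta> k = (\<lambda>h. \<alpha> h + of_int k * \<delta> h)" for k :: int
  have \<delta>_root: "\<delta> \<in> roots sc br H" and "root_form B H \<delta> \<delta> = 0"
    using \<delta> unfolding isotropic_roots_def by auto
  have \<alpha>_dual: "\<alpha> \<in> Hdual" and \<delta>_dual: "\<delta> \<in> Hdual"
    using \<alpha> \<delta>_root by (auto intro: roots_in_dual)
  note string = root_form_isotropic_string[OF \<alpha>_dual \<delta>_dual \<open>root_form B H \<delta> \<delta> = 0\<close>, of "of_int _"]
  have "{k. \<beta> k \<in> roots sc br H} \<subseteq> {k. cmod (?A + of_int k * (2 * ?c)) \<le> 2 * cmod ?c}"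
  proof (intro subsetI CollectI)
    fix k assume "k \<in> {k. \<beta> k \<in> roots sc br H}"
    show "cmod (?A + of_int k * (2 * ?c)) \<le> 2 * cmod ?c"
    proof (cases "root_form B H (\<beta> k) (\<beta> k) = 0")
      case True
      then show ?thesis using string(3) unfolding \<beta>_def by simp
    next
      case False
      with \<open>k \<in> {k. \<beta> k \<in> roots sc br H}\<close> have "\<beta> k \<in> nonisotropic_roots sc br B H"
        unfolding nonisotropic_roots_def by simp
      then have "cmod (root_form B H (\<beta> k) (\<beta> k)) \<le> 2 * cmod (root_form B H (\<beta> k) \<delta>)"
        by (rule nonisotropic_root_norm_le[OF G3 _ \<delta>_root])
          (simp add: \<beta>_def string(1) \<open>?c \<noteq> 0\<close>)
      then show ?thesis using string(1,3) unfolding \<beta>_def by simp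
    qed
  qed
  moreover have "finite {k::int. cmod (?A + of_int k * (2 * ?c)) \<le> 2 * cmod ?c}"
    by (rule finite_int_affine_bounded) (simp add: \<open>?c \<noteq> 0\<close>)
  ultimately have "finite {k. \<beta> k \<in> roots sc br H}" by (rule finite_subset)
  then show False
    using isotropic_root_string_infinite[OF \<alpha> \<delta> \<open>?c \<noteq> 0\<close>] unfolding \<beta>_def by simp
qed

lemma isolated_root_centralizes_core:
  assumes "isolated_root sc br B H \<delta>"
  shows "G \<delta> \<subseteq> centralizer br (core sc br B H)"
proof
  fix x assume x: "x \<in> G \<delta>"
  have \<delta>_dual: "\<delta> \<in> Hdual"
    using assms unfolding isolated_root_def isotropic_roots_def roots_def by simp
  have "x \<in> centralizer br (\<Union>\<alpha>\<in>nonisotropic_roots sc br B H. G \<alpha>)"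
    unfolding centralizer_def
  proof (intro CollectI ballI)
    fix y assume "y \<in> (\<Union>\<alpha>\<in>nonisotropic_roots sc br B H. G \<alpha>)"
    then obtain \<alpha> where \<alpha>: "\<alpha> \<in> nonisotropic_roots sc br B H" "y \<in> G \<alpha>" by blast
    then have "\<alpha> \<in> Hdual" unfolding nonisotropic_roots_def by (auto intro: roots_in_dual)
    have "br x y \<in> G (\<lambda>h. \<delta> h + \<alpha> h)" by (rule root_space_bracket[OF x \<alpha>(2)])
    moreover have "(\<lambda>h. \<delta> h + \<alpha> h) \<notin> roots sc br H"
      using assms \<alpha>(1) unfolding isolated_root_def by blast
    moreover have "(\<lambda>h. \<delta> h + \<alpha> h) \<in> Hdual"
      using dual_space_lincomb[OF \<delta>_dual \<open>\<alpha> \<in> Hdual\<close>, of 1 1] by simp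
    ultimately show "br x y = 0" using rootsI by blast
  qed
  then show "x \<in> centralizer br (core sc br B H)"
    unfolding core_def centralizer_generated_subalgebra .
qed

lemma isotropic_root_centralizing_core_isolated:
  assumes G3: "GR3 sc br B H" and \<delta>: "\<delta> \<in> isotropic_roots sc br B H"
    and centralizes: "G \<delta> \<subseteq> centralizer br (core sc br B H)"
  shows "isolated_root sc br B H \<delta>"
  unfolding isolated_root_def
proof (intro conjI ballI notI)
  show "\<delta> \<in> isotropic_roots sc br B H" by fact
  fix \<alpha> assume \<alpha>: "\<alpha> \<in> nonisotropic_roots sc br B H"
  define \<beta> where "\<beta> = (\<lambda>h. \<alpha> h + 1 * \<delta> h)"
  assume "(\<lambda>h. \<delta> h + \<alpha> h) \<in> roots sc br H"
  then have \<beta>_root: "\<beta> \<in> roots sc br H" unfolding \<beta>_def by (simp add: add.commute)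
  have \<alpha>_root: "\<alpha> \<in> roots sc br H" and "root_form B H \<alpha> \<alpha> \<noteq> 0"
    using \<alpha> unfolding nonisotropic_roots_def by auto
  have \<delta>_root: "\<delta> \<in> roots sc br H" and "root_form B H \<delta> \<delta> = 0"
    using \<delta> unfolding isotropic_roots_def by auto
  have \<alpha>_dual: "\<alpha> \<in> Hdual" and \<delta>_dual: "\<delta> \<in> Hdual" and \<beta>_dual: "\<beta> \<in> Hdual"
    using \<alpha>_root \<delta>_root \<beta>_root by (auto intro: roots_in_dual)
  note string = root_form_isotropic_string[OF \<alpha>_dual \<delta>_dual \<open>root_form B H \<delta> \<delta> = 0\<close>, of 1,
      folded \<beta>_def, unfolded isotropic_root_orthogonal[OF G3 \<alpha>_root \<delta>]]
  have \<beta>: "\<beta> \<in> nonisotropic_roots sc br B H"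
    using \<beta>_root string(3) \<open>root_form B H \<alpha> \<alpha> \<noteq> 0\<close> unfolding nonisotropic_roots_def by simp
  obtain e f where e: "e \<in> G \<beta>" and f: "f \<in> G (\<lambda>h. - \<beta> h)" and triple: "sl2_triple e f (coroot \<beta>)"
    and "locally_nilpotent (br e)" "locally_nilpotent (br f)"
    by (rule nonisotropic_root_sl2_triple[OF G3 \<beta>])
  obtain g where g: "g \<in> G (\<lambda>h. - \<alpha> h)" "g \<noteq> 0"
    using roots_uminus[OF \<alpha>_root] by (rule root_vector_exists)
  have "\<alpha> (coroot \<beta>) = 2"
    using dual_space_coroot[OF \<alpha>_dual \<beta>_dual] string(2,3) \<open>root_form B H \<alpha> \<alpha> \<noteq> 0\<close>
    by (simp add: root_form_sym[of \<alpha> \<beta>])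
  then have "br (coroot \<beta>) g = sc (-2) g"
    using g(1) coroot_in_H[OF \<beta>_dual] unfolding mem_root_space by simp
  then have "br f (br e g) \<noteq> 0"
    using sl2_lower_raise_nonzero[OF triple \<open>locally_nilpotent (br f)\<close>] g(2) by blast
  moreover have "br e g \<in> G (\<lambda>h. \<beta> h + - \<alpha> h)" by (rule root_space_bracket[OF e g(1)])
  then have "br e g \<in> G \<delta>" unfolding \<beta>_def by simp
  moreover have "f \<in> core sc br B H"
    using root_space_subset_core[OF nonisotropic_roots_uminus[OF \<beta>]] f by blast
  ultimately show False
    using centralizes bracket_antisym[of f "br e g"] unfolding centralizer_def by auto
qed

end

theorem proposition1p4:
  fixes sc :: "complex \<Rightarrow> 'g::ab_group_add \<Rightarrow> 'g"
    and br :: "'g \<Rightarrow> 'g \<Rightarrow> 'g"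
    and B :: "'g \<Rightarrow> 'g \<Rightarrow> complex"
    and H :: "'g set"
  shows "(lie_algebra sc br \<and> GR1 sc br B \<and> GR2 sc br H \<and> GR3 sc br B H \<longrightarrow>
            (\<forall>\<alpha>\<in>roots sc br H. \<forall>\<delta>\<in>isotropic_roots sc br B H. root_form B H \<alpha> \<delta> = 0))
       \<and> (generalized_reductive sc br B H \<longrightarrow>
            (\<forall>\<delta>\<in>isotropic_roots sc br B H.
               isolated_root sc br B H \<delta> \<longleftrightarrow>
               root_space sc br H \<delta> \<subseteq> centralizer br (core sc br B H)))"
proof (intro conjI impI ballI)
  fix \<alpha> \<delta>
  assume gr: "lie_algebra sc br \<and> GR1 sc br B \<and> GR2 sc br H \<and> GR3 sc br B H"
    and "\<alpha> \<in> roots sc br H" "\<delta> \<in> isotropic_roots sc br B H"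
  interpret split_quadratic_lie_alg sc br B H
    by unfold_locales (use gr in auto)
  show "root_form B H \<alpha> \<delta> = 0"
    using isotropic_root_orthogonal gr \<open>\<alpha> \<in> roots sc br H\<close> \<open>\<delta> \<in> isotropic_roots sc br B H\<close>
    by blast
next
  fix \<delta>
  assume "generalized_reductive sc br B H" and \<delta>: "\<delta> \<in> isotropic_roots sc br B H"
  then have G3: "GR3 sc br B H" and "lie_algebra sc br" "GR1 sc br B" "GR2 sc br H"
    unfolding generalized_reductive_def by auto
  then interpret split_quadratic_lie_alg sc br B H
    by unfold_locales
  show "isolated_root sc br B H \<delta> \<longleftrightarrow> root_space sc br H \<delta> \<subseteq> centralizer br (core sc br B H)"
    using isolated_root_centralizes_core isotropic_root_centralizing_core_isolated[OF G3 \<delta>] by blast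
qed

end
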